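(* As $k\to\infty$, $f(k)=\frac{k^2}{3}\bigl(1+o(1)\bigr)$.
   Context: A $k$-colouring of the edges of the complete graph $K_n$ (colours from $[k]=\{1,\dots,k\}$) is called connected if for each colour $i\in[k]$ the edges of colour $i$ form a connected spanning subgraph of $K_n$. A triangle is multicoloured if its three edges have three distinct colours; its colour set is the set of these three colours. $f(k)$ denotes the minimum, over all $n$ and all connected $k$-colourings of $K_n$, of the number of distinct $3$-sets of colours that occur as colour sets of multicoloured triangles. *)

theory Defs
  imports Main "HOL-Library.Landau_Symbols"
begin

definition colouring :: "nat \<Rightarrow> nat \<Rightarrow> (nat \<Rightarrow> nat \<Rightarrow> nat) \<Rightarrow> bool" where
  "colouring k n c \<longleftrightarrow>
     (\<forall>x<n. \<forall>y<n. x \<noteq> y \<longrightarrow> c x y = c y x \<and> c x y \<in> {1..k})"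

definition colour_edge :: "nat \<Rightarrow> (nat \<Rightarrow> nat \<Rightarrow> nat) \<Rightarrow> nat \<Rightarrow> nat \<Rightarrow> nat \<Rightarrow> bool" where
  "colour_edge n c i x y \<longleftrightarrow> x < n \<and> y < n \<and> x \<noteq> y \<and> c x y = i"

definition connected_colouring :: "nat \<Rightarrow> nat \<Rightarrow> (nat \<Rightarrow> nat \<Rightarrow> nat) \<Rightarrow> bool" where
  "connected_colouring k n c \<longleftrightarrow> colouring k n c \<and>
     (\<forall>i\<in>{1..k}. \<forall>u<n. \<forall>v<n. (colour_edge n c i)\<^sup>*\<^sup>* u v)"

definition triangle_colour_sets :: "nat \<Rightarrow> (nat \<Rightarrow> nat \<Rightarrow> nat) \<Rightarrow> nat set set" where
  "triangle_colour_sets n c =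
     {{c a b, c b d, c a d} | a b d. a < n \<and> b < n \<and> d < n \<and> a \<noteq> b \<and> b \<noteq> d \<and> a \<noteq> d
        \<and> card {c a b, c b d, c a d} = 3}"

definition f :: "nat \<Rightarrow> nat" where
  "f k = Inf {card (triangle_colour_sets n c) | n c. 2 \<le> n \<and> connected_colouring k n c}"

end

theory Submission
  imports Defs "HOL-Number_Theory.Number_Theory"
begin

text \<open>
  Fix a colour \<open>i\<close> and a set \<open>S\<close> of other colours, neither empty nor everything.
  Merging the colours into the groups \<open>{i}\<close>, \<open>S\<close> and the rest yields a three-colouring all of
  whose classes are connected, so by (a special case of) Gallai's theorem it has a rainbow
  triangle: a multicoloured triangle through \<open>i\<close> using a colour outside \<open>S\<close>. Growing \<open>S\<close> one
  colour at a time shows that \<open>i\<close> lies in at least \<open>k - 2\<close> triangle colour sets, and double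
  counting gives \<open>3 f(k) \<ge> k (k - 2)\<close>.

  For odd \<open>n\<close> colour the edge \<open>xy\<close> of \<open>K\<^sub>n\<close> by the circular distance of \<open>x\<close> and
  \<open>y\<close>, with distinct colours for \<open>k\<close> distances coprime to \<open>n\<close> (each such class is a Hamiltonian
  cycle). The three distances \<open>p < q < r \<le> n/2\<close> of a triangle satisfy \<open>p + q = r\<close> or
  \<open>p + q + r = n\<close>, so there are at most \<open>(n\<^sup>2 + 3)/12\<close> colour sets. It remains to find odd
  \<open>n \<le> 2k(1 + 1/m)\<close> with \<open>k\<close> units below \<open>n/2\<close>; this is done among \<open>n = 1 + (8m)! (B + t)\<close>, which
  have no small prime factors, by averaging \<open>\<Sum>1/q\<close> over their prime factors \<open>q\<close>.
\<close>

section \<open>Three-colourings without rainbow triangles\<close>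

definition colour_class :: "'a set \<Rightarrow> ('a \<Rightarrow> 'a \<Rightarrow> nat) \<Rightarrow> nat \<Rightarrow> 'a \<Rightarrow> 'a \<Rightarrow> bool" where
  "colour_class V t j x y \<longleftrightarrow> x \<in> V \<and> y \<in> V \<and> x \<noteq> y \<and> t x y = j"

definition symmetric_on :: "'a set \<Rightarrow> ('a \<Rightarrow> 'a \<Rightarrow> nat) \<Rightarrow> bool" where
  "symmetric_on V t \<longleftrightarrow> (\<forall>x\<in>V. \<forall>y\<in>V. x \<noteq> y \<longrightarrow> t x y = t y x)"

definition rainbow_free :: "'a set \<Rightarrow> ('a \<Rightarrow> 'a \<Rightarrow> nat) \<Rightarrow> bool" where
  "rainbow_free V t \<longleftrightarrow> (\<forall>x\<in>V. \<forall>y\<in>V. \<forall>z\<in>V. x \<noteq> y \<longrightarrow> y \<noteq> z \<longrightarrow> x \<noteq> z \<longrightarrow>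
      t x y = t y z \<or> t y z = t x z \<or> t x y = t x z)"

lemma symmetric_onD: "symmetric_on V t \<Longrightarrow> x \<in> V \<Longrightarrow> y \<in> V \<Longrightarrow> x \<noteq> y \<Longrightarrow> t x y = t y x"
  unfolding symmetric_on_def by blast

lemma rainbow_freeD:
  "rainbow_free V t \<Longrightarrow> x \<in> V \<Longrightarrow> y \<in> V \<Longrightarrow> z \<in> V \<Longrightarrow> x \<noteq> y \<Longrightarrow> y \<noteq> z \<Longrightarrow> x \<noteq> z \<Longrightarrow>
     t x y = t y z \<or> t y z = t x z \<or> t x y = t x z"
  unfolding rainbow_free_def by blast

lemma symmetric_on_subset: "symmetric_on V t \<Longrightarrow> W \<subseteq> V \<Longrightarrow> symmetric_on W t"
  unfolding symmetric_on_def by blast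

lemma rainbow_free_subset: "rainbow_free V t \<Longrightarrow> W \<subseteq> V \<Longrightarrow> rainbow_free W t"
  unfolding rainbow_free_def by blast

lemma colour_class_rtranclp_sym:
  assumes "symmetric_on V t" "(colour_class V t j)\<^sup>*\<^sup>* x y"
  shows "(colour_class V t j)\<^sup>*\<^sup>* y x"
proof -
  have "symp (colour_class V t j)"
    using assms(1) unfolding symp_def colour_class_def symmetric_on_def by metis
  then show ?thesis using assms(2) by (meson symp_rtranclp sympD)
qed

lemma colour_to_other_component_constant:
  assumes rf: "rainbow_free V t" and path: "(colour_class V t a)\<^sup>*\<^sup>* x x'"
    and z: "z \<in> V" "\<not> (colour_class V t a)\<^sup>*\<^sup>* x z"
  shows "t x' z = t x z"
  using path
proof (induction rule: rtranclp_induct)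
  case base
  show ?case ..
next
  case (step y x')
  let ?R = "(colour_class V t a)\<^sup>*\<^sup>*"
  have e: "y \<in> V" "x' \<in> V" "y \<noteq> x'" "t y x' = a"
    using step.hyps(2) unfolding colour_class_def by auto
  have "?R x x'" using step.hyps by (rule rtranclp.rtrancl_into_rtrancl)
  have off_class: "t w z \<noteq> a" if "?R x w" "w \<in> V" for w
  proof
    assume "t w z = a"
    moreover have "w \<noteq> z" using that z(2) by auto
    ultimately have "colour_class V t a w z" using that(2) z(1) unfolding colour_class_def by simp
    then show False using that(1) z(2) by (meson rtranclp.rtrancl_into_rtrancl)
  qed
  have "y \<noteq> z" "x' \<noteq> z" using step.hyps(1) \<open>?R x x'\<close> z(2) by auto
  then have "t y x' = t x' z \<or> t x' z = t y z \<or> t y x' = t y z"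
    using rainbow_freeD[OF rf e(1,2) z(1) e(3)] by blast
  then show ?case
    using step.IH e(4) off_class[OF step.hyps(1) e(1)] off_class[OF \<open>?R x x'\<close> e(2)] by auto
qed

text \<open>A walk of colour \<open>a\<close> that leaves a colour-\<open>a\<close> component of \<open>W\<close> must pass through the extra
  vertex \<open>v\<close>, so some vertex of the component is joined to \<open>v\<close> in colour \<open>a\<close>.\<close>
lemma component_exit_through_vertex:
  assumes sym: "symmetric_on (insert v W) t"
    and path: "(colour_class (insert v W) t a)\<^sup>*\<^sup>* z y"
    and "z \<in> W" "y \<in> W" "\<not> (colour_class W t a)\<^sup>*\<^sup>* z y"
  shows "\<exists>u\<in>W. (colour_class W t a)\<^sup>*\<^sup>* z u \<and> t v u = a"
proof -
  let ?R = "(colour_class W t a)\<^sup>*\<^sup>*"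
  from path have "(\<exists>u\<in>W. ?R z u \<and> t v u = a) \<or> (y \<in> W \<and> ?R z y)"
  proof (induction rule: rtranclp_induct)
    case base
    then show ?case using \<open>z \<in> W\<close> by simp
  next
    case (step w w')
    have e: "w \<in> insert v W" "w' \<in> insert v W" "w \<noteq> w'" "t w w' = a"
      using step.hyps(2) unfolding colour_class_def by auto
    show ?case
    proof (cases "w' = v")
      case True
      then have "t v w = a" using symmetric_onD[OF sym e(1,2,3)] e(4) by simp
      then show ?thesis using step.IH by blast
    next
      case False
      with e(2) have "w' \<in> W" by simp
      then have "colour_class W t a w w'" if "w \<in> W"
        using e(3,4) that unfolding colour_class_def by simp
      then show ?thesis using step.IH \<open>w' \<in> W\<close> by (meson rtranclp.rtrancl_into_rtrancl)
    qed
  qed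
  then show ?thesis using assms(5) by blast
qed

lemma colour_between_components:
  assumes sym: "symmetric_on (insert v W) t" and rf: "rainbow_free (insert v W) t" and "v \<notin> W"
    and conn: "(colour_class (insert v W) t a)\<^sup>*\<^sup>* z2 z1"
    and z: "z1 \<in> W" "z2 \<in> W" "\<not> (colour_class W t a)\<^sup>*\<^sup>* z2 z1"
    and b: "t v z1 = b" "b \<noteq> a"
  shows "t z2 z1 = b"
proof -
  let ?R = "(colour_class W t a)\<^sup>*\<^sup>*"
  obtain u where u: "u \<in> W" "?R z2 u" "t v u = a"
    using component_exit_through_vertex[OF sym conn z(2) z(1) z(3)] by blast
  have "?R u z2"
    using colour_class_rtranclp_sym[OF symmetric_on_subset[OF sym] u(2)] by blast
  have "\<not> ?R u z1" using u(2) z(3) by (meson rtranclp_trans)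
  then have "u \<noteq> z1" by auto
  then have "t u z1 \<noteq> a" using \<open>\<not> ?R u z1\<close> u(1) z(1) unfolding colour_class_def by blast
  have "v \<noteq> u" "v \<noteq> z1" using u(1) z(1) \<open>v \<notin> W\<close> by auto
  then have "t v u = t u z1 \<or> t u z1 = t v z1 \<or> t v u = t v z1"
    using rainbow_freeD[OF rf _ _ _ _ \<open>u \<noteq> z1\<close>] u(1) z(1) by simp
  with \<open>t u z1 \<noteq> a\<close> u(3) b have "t u z1 = b" by auto
  moreover have "t z2 z1 = t u z1"
    using colour_to_other_component_constant[OF rainbow_free_subset[OF rf] \<open>?R u z2\<close> z(1)]
      \<open>\<not> ?R u z1\<close> by blast
  ultimately show ?thesis by simp
qed

lemma rainbow_free_insert_disconnected:
  assumes sym: "symmetric_on (insert v W) t" and rf: "rainbow_free (insert v W) t"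
    and "v \<notin> W" and "a < 3" and x0: "x0 \<in> W" and y0: "y0 \<in> W"
    and disc: "\<not> (colour_class W t a)\<^sup>*\<^sup>* x0 y0"
  shows "\<exists>j<3. \<exists>u\<in>insert v W. \<exists>w\<in>insert v W. \<not> (colour_class (insert v W) t j)\<^sup>*\<^sup>* u w"
proof (rule ccontr)
  assume "\<not> ?thesis"
  then have conn: "(colour_class (insert v W) t j)\<^sup>*\<^sup>* u w"
    if "j < 3" "u \<in> insert v W" "w \<in> insert v W" for j u w
    using that by blast
  let ?R = "(colour_class W t a)\<^sup>*\<^sup>*"
  have symW: "symmetric_on W t" using symmetric_on_subset[OF sym] by blast
  have cross: "t z2 z1 = b" if "z1 \<in> W" "z2 \<in> W" "\<not> ?R z2 z1" "t v z1 = b" "b \<noteq> a" for z1 z2 b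
    using colour_between_components[OF sym rf \<open>v \<notin> W\<close> conn[OF \<open>a < 3\<close>]] that by simp
  have at_v: "\<exists>z\<in>W. t v z = e" if "e < 3" for e
  proof -
    have "v \<noteq> x0" using x0 \<open>v \<notin> W\<close> by auto
    with conn[OF that, of v x0] x0 obtain z where "colour_class (insert v W) t e v z"
      by (auto elim: converse_rtranclpE)
    then show ?thesis unfolding colour_class_def by auto
  qed
  obtain b d :: nat where bd: "b < 3" "d < 3" "b \<noteq> a" "d \<noteq> a" "b \<noteq> d"
  proof
    show "(a + 1) mod 3 < 3" "(a + 2) mod 3 < 3" by simp_all
    show "(a + 1) mod 3 \<noteq> a" "(a + 2) mod 3 \<noteq> a" "(a + 1) mod 3 \<noteq> (a + 2) mod 3"
      using \<open>a < 3\<close> by presburger+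
  qed
  obtain zb zd where zb: "zb \<in> W" "t v zb = b" and zd: "zd \<in> W" "t v zd = d"
    using at_v bd by meson
  have "b = d"
  proof (cases "?R zb zd")
    case True
    obtain y where y: "y \<in> W" "\<not> ?R zb y"
      using x0 y0 disc colour_class_rtranclp_sym[OF symW] by (meson rtranclp_trans)
    have "\<not> ?R y zb" "\<not> ?R y zd"
      using y True colour_class_rtranclp_sym[OF symW] by (meson rtranclp_trans)+
    then have "t y zb = b" "t y zd = d" using cross y(1) zb zd bd by auto
    moreover have "t zd y = t zb y"
      using colour_to_other_component_constant[OF rainbow_free_subset[OF rf] True y(1)] y(2)
      by blast
    moreover have "zb \<noteq> y" "zd \<noteq> y" using \<open>\<not> ?R y zb\<close> \<open>\<not> ?R y zd\<close> by auto
    ultimately show ?thesis using symmetric_onD[OF symW] y(1) zb(1) zd(1) by metis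
  next
    case False
    then have "\<not> ?R zd zb" using colour_class_rtranclp_sym[OF symW] by blast
    then have "t zd zb = b" "t zb zd = d" using cross False zb zd bd by auto
    moreover have "zb \<noteq> zd" using False by auto
    ultimately show ?thesis using symmetric_onD[OF symW zb(1) zd(1)] by simp
  qed
  with \<open>b \<noteq> d\<close> show False ..
qed

text \<open>A special case of Gallai's theorem on edge colourings without rainbow triangles: at most two
  colour classes are connected.\<close>
theorem rainbow_free_three_colouring_disconnected:
  assumes "finite V" "2 \<le> card V" "symmetric_on V t" "rainbow_free V t"
  shows "\<exists>j<3. \<exists>u\<in>V. \<exists>w\<in>V. \<not> (colour_class V t j)\<^sup>*\<^sup>* u w"
  using assms
proof (induction "card V" arbitrary: V rule: less_induct)
  case less
  show ?case
  proof (cases "card V = 2")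
    case True
    then obtain x y where V: "V = {x, y}" "x \<noteq> y" by (auto simp: card_2_iff)
    define j where "j = (t x y + 1) mod 3"
    have "t y x = t x y" using symmetric_onD[OF less.prems(3), of y x] V by auto
    moreover have "j \<noteq> t x y" unfolding j_def by presburger
    ultimately have "\<not> colour_class V t j p q" for p q
      using V unfolding colour_class_def by auto
    then have "\<not> (colour_class V t j)\<^sup>*\<^sup>* x y"
      using V(2) by (auto elim: converse_rtranclpE)
    then show ?thesis using V by (intro exI[of _ j]) (auto simp: j_def)
  next
    case False
    then obtain v where v: "v \<in> V" using less.prems(2) by fastforce
    define W where "W = V - {v}"
    have V: "V = insert v W" "v \<notin> W" using v W_def by auto
    have "card W < card V" "2 \<le> card W"
      using less.prems(1,2) False v unfolding W_def by auto
    moreover have "symmetric_on W t" "rainbow_free W t"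
      using symmetric_on_subset[OF less.prems(3)] rainbow_free_subset[OF less.prems(4)]
      unfolding W_def by blast+
    ultimately obtain a x0 y0 where "a < 3" "x0 \<in> W" "y0 \<in> W"
      "\<not> (colour_class W t a)\<^sup>*\<^sup>* x0 y0"
      using less.hyps[of W] less.prems(1) unfolding W_def by blast
    with less.prems(3,4) show ?thesis
      unfolding V(1) using rainbow_free_insert_disconnected[OF _ _ V(2)] by blast
  qed
qed

section \<open>The lower bound\<close>

lemma colouring_range:
  assumes "colouring k n c" "x < n" "y < n" "x \<noteq> y"
  shows "c x y \<in> {1..k}" "c x y = c y x"
  using assms unfolding colouring_def by auto

lemma triangle_colour_sets_subset:
  "colouring k n c \<Longrightarrow> triangle_colour_sets n c \<subseteq> Pow {1..k}"
  unfolding triangle_colour_sets_def colouring_def by fastforce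

lemma finite_triangle_colour_sets: "colouring k n c \<Longrightarrow> finite (triangle_colour_sets n c)"
  using triangle_colour_sets_subset finite_subset by (metis finite_Pow_iff finite_atLeastAtMost)

lemma card_triangle_colour_set: "T \<in> triangle_colour_sets n c \<Longrightarrow> card T = 3"
  unfolding triangle_colour_sets_def by auto

lemma exists_triangle_across_colour_split:
  assumes cc: "connected_colouring k n c" and "2 \<le> n" and i: "i \<in> {1..k}"
    and S: "S \<subseteq> {1..k} - {i}" "s \<in> S" and s': "s' \<in> {1..k} - {i} - S"
  shows "\<exists>T\<in>triangle_colour_sets n c. i \<in> T \<and>
           (\<exists>y \<in> {1..k} - {i} - S. y \<in> T \<and> T \<subseteq> insert i (insert y S))"
proof -
  have col: "colouring k n c" using cc unfolding connected_colouring_def by simp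
  define t where "t x y = (if c x y = i then 0 else if c x y \<in> S then 1 else 2::nat)" for x y
  have "\<not> rainbow_free {0..<n} t"
  proof
    assume rf: "rainbow_free {0..<n} t"
    have "symmetric_on {0..<n} t"
      unfolding symmetric_on_def t_def using colouring_range(2)[OF col] by auto
    then obtain j u w where j: "j < 3" and uw: "u < n" "w < n"
      and disc: "\<not> (colour_class {0..<n} t j)\<^sup>*\<^sup>* u w"
      using rainbow_free_three_colouring_disconnected[OF _ _ _ rf] \<open>2 \<le> n\<close> by auto
    obtain cj where "cj \<in> {1..k}"
      and sub: "\<And>x y. colour_edge n c cj x y \<Longrightarrow> colour_class {0..<n} t j x y"
    proof -
      have "j = 0 \<or> j = 1 \<or> j = 2" using j by auto
      moreover have "colour_edge n c i x y \<Longrightarrow> colour_class {0..<n} t 0 x y"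
        and "colour_edge n c s x y \<Longrightarrow> colour_class {0..<n} t 1 x y"
        and "colour_edge n c s' x y \<Longrightarrow> colour_class {0..<n} t 2 x y" for x y
        using S s' unfolding colour_edge_def colour_class_def t_def by auto
      ultimately show ?thesis using that i S s' by blast
    qed
    then have "(colour_edge n c cj)\<^sup>*\<^sup>* u w"
      using cc uw unfolding connected_colouring_def by blast
    then have "(colour_class {0..<n} t j)\<^sup>*\<^sup>* u w"
      by (rule rtranclp_mono[THEN predicate2D, rotated]) (use sub in blast)
    with disc show False ..
  qed
  then obtain x y z where xyz: "x < n" "y < n" "z < n" "x \<noteq> y" "y \<noteq> z" "x \<noteq> z"
    and d: "t x y \<noteq> t y z" "t y z \<noteq> t x z" "t x y \<noteq> t x z"
    unfolding rainbow_free_def by auto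
  define T where "T = {c x y, c y z, c x z}"
  define y0 where "y0 = (if t x y = 2 then c x y else if t y z = 2 then c y z else c x z)"
  have "t p q = t p' q'" if "c p q = c p' q'" for p q p' q' using that unfolding t_def by simp
  then have "c x y \<noteq> c y z" "c y z \<noteq> c x z" "c x y \<noteq> c x z" using d by blast+
  then have "T \<in> triangle_colour_sets n c"
    unfolding triangle_colour_sets_def T_def using xyz by fastforce
  moreover have "i \<in> T" using d unfolding T_def t_def by (auto split: if_splits)
  moreover have "y0 \<in> {1..k} - {i} - S" "y0 \<in> T" "T \<subseteq> insert i (insert y0 S)"
    using d colouring_range(1)[OF col] xyz unfolding T_def y0_def t_def by (auto split: if_splits)
  ultimately show ?thesis by blast
qed

lemma triangle_colour_sets_chain:
  assumes cc: "connected_colouring k n c" and "2 \<le> n" and i: "i \<in> {1..k}"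
    and m: "Suc m \<le> k - 1"
  shows "\<exists>S F. S \<subseteq> {1..k} - {i} \<and> card S = Suc m \<and> F \<subseteq> {T \<in> triangle_colour_sets n c. i \<in> T}
           \<and> finite F \<and> card F = m \<and> (\<forall>T\<in>F. T \<subseteq> insert i S)"
  using m
proof (induction m)
  case 0
  then have "(if i = 1 then 2 else 1) \<in> {1..k} - {i}" using i by auto
  then show ?case by (intro exI[of _ "{if i = 1 then 2 else 1}"] exI[of _ "{}"]) auto
next
  case (Suc m)
  then obtain S F where S: "S \<subseteq> {1..k} - {i}" "card S = Suc m"
    and F: "F \<subseteq> {T \<in> triangle_colour_sets n c. i \<in> T}" "finite F" "card F = m"
      "\<forall>T\<in>F. T \<subseteq> insert i S"
    by auto
  have "finite S" "S \<noteq> {}" using S(2) card.infinite by force+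
  moreover have "card S < card ({1..k} - {i})" using S(2) Suc.prems i by simp
  ultimately have "\<not> {1..k} - {i} \<subseteq> S" using card_mono leD by blast
  then obtain s' where s': "s' \<in> {1..k} - {i} - S" by blast
  obtain s where "s \<in> S" using \<open>S \<noteq> {}\<close> by blast
  then obtain T y where T: "T \<in> triangle_colour_sets n c" "i \<in> T" and y: "y \<in> {1..k} - {i} - S"
      "y \<in> T" "T \<subseteq> insert i (insert y S)"
    using exists_triangle_across_colour_split[OF cc \<open>2 \<le> n\<close> i S(1) _ s'] by blast
  have "T \<notin> F" using F(4) y by auto
  with \<open>finite S\<close> show ?case
    using S F T y by (intro exI[of _ "insert y S"] exI[of _ "insert T F"]) auto
qed

lemma card_triangle_colour_sets_containing:
  assumes "connected_colouring k n c" "2 \<le> n" "i \<in> {1..k}"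
  shows "k - 2 \<le> card {T \<in> triangle_colour_sets n c. i \<in> T}"
proof (cases "k \<ge> 2")
  case True
  have "Suc (k - 2) \<le> k - 1" using True by simp
  from triangle_colour_sets_chain[OF assms this] obtain F
    where F: "F \<subseteq> {T \<in> triangle_colour_sets n c. i \<in> T}" "card F = k - 2"
    by blast
  have "finite (triangle_colour_sets n c)"
    using assms(1) finite_triangle_colour_sets unfolding connected_colouring_def by blast
  then have "card F \<le> card {T \<in> triangle_colour_sets n c. i \<in> T}"
    by (intro card_mono F(1)) simp
  with F(2) show ?thesis by simp
qed simp

lemma sum_card_containing:
  assumes "finite A" "finite K" "\<And>T. T \<in> A \<Longrightarrow> T \<subseteq> K \<and> card T = r"
  shows "(\<Sum>i\<in>K. card {T\<in>A. i \<in> T}) = r * card A"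
proof -
  have "(\<Sum>i\<in>K. card {T\<in>A. i \<in> T}) = (\<Sum>i\<in>K. \<Sum>T\<in>A. if i \<in> T then 1 else 0)"
    using assms(1) by (simp add: sum.inter_filter[symmetric])
  also have "\<dots> = (\<Sum>T\<in>A. \<Sum>i\<in>K. if i \<in> T then 1 else 0)" by (rule sum.swap)
  also have "\<dots> = (\<Sum>T\<in>A. card {i\<in>K. i \<in> T})"
    using assms(2) by (simp add: sum.inter_filter[symmetric])
  also have "\<dots> = (\<Sum>T\<in>A. r)"
  proof (rule sum.cong)
    fix T assume "T \<in> A"
    then have "{i\<in>K. i \<in> T} = T" using assms(3) by blast
    then show "card {i\<in>K. i \<in> T} = r" using assms(3) \<open>T \<in> A\<close> by simp
  qed simp
  finally show ?thesis by simp
qed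

lemma card_triangle_colour_sets_lower:
  assumes cc: "connected_colouring k n c" and "2 \<le> n"
  shows "k * (k - 2) \<le> 3 * card (triangle_colour_sets n c)"
proof -
  have col: "colouring k n c" using cc unfolding connected_colouring_def by simp
  have "k * (k - 2) = (\<Sum>i\<in>{1..k}. k - 2)" by simp
  also have "\<dots> \<le> (\<Sum>i\<in>{1..k}. card {T \<in> triangle_colour_sets n c. i \<in> T})"
    by (rule sum_mono) (rule card_triangle_colour_sets_containing[OF cc \<open>2 \<le> n\<close>])
  also have "\<dots> = 3 * card (triangle_colour_sets n c)"
    by (rule sum_card_containing) (use finite_triangle_colour_sets[OF col]
        triangle_colour_sets_subset[OF col] card_triangle_colour_set in auto)
  finally show ?thesis .
qed

section \<open>Circulant colourings\<close>

definition circ_dist :: "nat \<Rightarrow> nat \<Rightarrow> nat \<Rightarrow> nat" where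
  "circ_dist n x y = min ((x + n - y) mod n) ((y + n - x) mod n)"

lemma circ_dist_sym: "circ_dist n x y = circ_dist n y x"
  unfolding circ_dist_def by simp

lemma circ_dist_less:
  assumes "x < y" "y < n"
  shows "circ_dist n x y = min (y - x) (n - (y - x))"
proof -
  have "x + n - y < n" using assms by simp
  then have "(x + n - y) mod n = x + n - y" by simp
  moreover have "x + n - y = n - (y - x)" using assms by simp
  ultimately have "(x + n - y) mod n = n - (y - x)" by simp
  moreover have "(y + n - x) mod n = y - x"
  proof -
    have "y + n - x = (y - x) + n" using assms by simp
    then have "(y + n - x) mod n = ((y - x) + n) mod n" by simp
    also have "\<dots> = (y - x) mod n" by simp
    also have "\<dots> = y - x" using assms by simp
    finally show ?thesis .
  qed
  ultimately show ?thesis unfolding circ_dist_def by (simp add: min.commute)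
qed

lemma circ_dist_bounds:
  assumes "x < n" "y < n" "x \<noteq> y"
  shows "1 \<le> circ_dist n x y \<and> circ_dist n x y \<le> n div 2"
proof (cases "x < y")
  case True
  then show ?thesis using circ_dist_less[OF True assms(2)] assms by (simp add: min_def; linarith)
next
  case False
  then have "y < x" using assms by simp
  then show ?thesis
    using circ_dist_less[OF \<open>y < x\<close> assms(1)] circ_dist_sym[of n x y] assms
    by (simp add: min_def; linarith)
qed

lemma min_complement_relation:
  fixes e1 e2 n :: nat
  assumes "e1 + e2 < n"
  defines "d1 \<equiv> min e1 (n - e1)" and "d2 \<equiv> min e2 (n - e2)" and "d3 \<equiv> min (e1+e2) (n - (e1+e2))"
  shows "d1 + d2 = d3 \<or> d1 + d3 = d2 \<or> d2 + d3 = d1 \<or> d1 + d2 + d3 = n"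
proof -
  consider "e1 \<le> n - e1" "e2 \<le> n - e2" "e1+e2 \<le> n - (e1+e2)"
    | "e1 \<le> n - e1" "e2 \<le> n - e2" "\<not> e1+e2 \<le> n - (e1+e2)"
    | "\<not> e1 \<le> n - e1" | "\<not> e2 \<le> n - e2" by blast
  then show ?thesis
  proof cases
    case 1 then have "d1 = e1" "d2 = e2" "d3 = e1+e2" unfolding d1_def d2_def d3_def by auto
    then show ?thesis by simp
  next
    case 2 then have "d1 = e1" "d2 = e2" "d3 = n - (e1+e2)" unfolding d1_def d2_def d3_def by auto
    then show ?thesis using assms(1) by simp
  next
    case 3 then have "d1 = n - e1" "d2 = e2" "d3 = n - (e1+e2)" unfolding d1_def d2_def d3_def using assms(1) by auto
    then show ?thesis using assms(1) by simp
  next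
    case 4 then have "d1 = e1" "d2 = n - e2" "d3 = n - (e1+e2)" unfolding d1_def d2_def d3_def using assms(1) by auto
    then show ?thesis using assms(1) by simp
  qed
qed

lemma circ_dist_relation_ordered:
  assumes "x < y" "y < z" "z < n"
  shows "circ_dist n x y + circ_dist n y z = circ_dist n x z \<or>
         circ_dist n x y + circ_dist n x z = circ_dist n y z \<or>
         circ_dist n y z + circ_dist n x z = circ_dist n x y \<or>
         circ_dist n x y + circ_dist n y z + circ_dist n x z = n"
proof -
  have e: "z - x = (y - x) + (z - y)" "(y - x) + (z - y) < n" using assms by auto
  have h1: "circ_dist n x y = min (y - x) (n - (y - x))" using circ_dist_less[of x y n] assms by simp
  have h2: "circ_dist n y z = min (z - y) (n - (z - y))" using circ_dist_less[of y z n] assms by simp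
  have h3': "circ_dist n x z = min (z - x) (n - (z - x))" using circ_dist_less[of x z n] assms by simp
  have h3: "circ_dist n x z = min ((y - x) + (z - y)) (n - ((y - x) + (z - y)))"
    using h3' by (simp only: e(1))
  show ?thesis unfolding h1 h2 h3 by (rule min_complement_relation[OF e(2)])
qed

lemma circ_dist_relation:
  assumes "x < n" "y < n" "z < n" "x \<noteq> y" "y \<noteq> z" "x \<noteq> z"
  shows "circ_dist n x y + circ_dist n y z = circ_dist n x z \<or>
         circ_dist n x y + circ_dist n x z = circ_dist n y z \<or>
         circ_dist n y z + circ_dist n x z = circ_dist n x y \<or>
         circ_dist n x y + circ_dist n y z + circ_dist n x z = n"
proof -
  consider "x < y" "y < z" | "x < z" "z < y" | "y < x" "x < z"
    | "y < z" "z < x" | "z < x" "x < y" | "z < y" "y < x"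
    using assms by linarith
  then show ?thesis
  proof cases
    case 1
    then show ?thesis using circ_dist_relation_ordered[of x y z n] assms by auto
  next
    case 2
    then show ?thesis using circ_dist_relation_ordered[of x z y n] assms circ_dist_sym[of n z y]
      by (simp add: ac_simps)
  next
    case 3
    then show ?thesis using circ_dist_relation_ordered[of y x z n] assms circ_dist_sym[of n y x]
      by (simp add: ac_simps)
  next
    case 4
    then show ?thesis
      using circ_dist_relation_ordered[of y z x n] assms circ_dist_sym[of n y x] circ_dist_sym[of n z x]
      by (simp add: ac_simps)
  next
    case 5
    then show ?thesis
      using circ_dist_relation_ordered[of z x y n] assms circ_dist_sym[of n z x] circ_dist_sym[of n z y]
      by (simp add: ac_simps)
  next
    case 6
    then show ?thesis
      using circ_dist_relation_ordered[of z y x n] assms circ_dist_sym[of n z y] circ_dist_sym[of n y x]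
        circ_dist_sym[of n z x]
      by (simp add: ac_simps)
  qed
qed

text \<open>By \<open>circ_dist_relation\<close>, the sorted distances of a multicoloured triangle of a circulant
  colouring form such a triple.\<close>
definition distance_triples :: "nat \<Rightarrow> (nat \<times> nat \<times> nat) set" where
  "distance_triples n =
     {(p, q, r). 1 \<le> p \<and> p < q \<and> q < r \<and> r \<le> n div 2 \<and> (p + q = r \<or> p + q + r = n)}"

lemma distance_triples_sort:
  assumes "p1 \<noteq> q1" "q1 \<noteq> r1" "p1 \<noteq> r1" "1 \<le> p1" "1 \<le> q1" "1 \<le> r1"
    "p1 \<le> n div 2" "q1 \<le> n div 2" "r1 \<le> n div 2"
    "p1 + q1 = r1 \<or> p1 + r1 = q1 \<or> q1 + r1 = p1 \<or> p1 + q1 + r1 = n"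
  shows "\<exists>p q r. (p,q,r) \<in> distance_triples n \<and> {p,q,r} = {p1,q1,r1}"
proof -
  consider "p1 < q1" "q1 < r1" | "p1 < r1" "r1 < q1" | "q1 < p1" "p1 < r1"
    | "q1 < r1" "r1 < p1" | "r1 < p1" "p1 < q1" | "r1 < q1" "q1 < p1"
    using assms by linarith
  then show ?thesis
  proof cases
    case 1
    then have "(p1, q1, r1) \<in> distance_triples n" using assms unfolding distance_triples_def by auto
    then show ?thesis by blast
  next
    case 2
    then have "(p1, r1, q1) \<in> distance_triples n" using assms unfolding distance_triples_def by auto
    then show ?thesis by blast
  next
    case 3
    then have "(q1, p1, r1) \<in> distance_triples n" using assms unfolding distance_triples_def by auto
    then show ?thesis by blast
  next
    case 4
    then have "(q1, r1, p1) \<in> distance_triples n" using assms unfolding distance_triples_def by auto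
    then show ?thesis by blast
  next
    case 5
    then have "(r1, p1, q1) \<in> distance_triples n" using assms unfolding distance_triples_def by auto
    then show ?thesis by blast
  next
    case 6
    then have "(r1, q1, p1) \<in> distance_triples n" using assms unfolding distance_triples_def by auto
    then show ?thesis by blast
  qed
qed

lemma triangle_colour_sets_circulant_subset:
  "triangle_colour_sets n (\<lambda>x y. col (circ_dist n x y))
     \<subseteq> (\<lambda>(p, q, r). col ` {p, q, r}) ` distance_triples n"
proof
  fix T assume "T \<in> triangle_colour_sets n (\<lambda>x y. col (circ_dist n x y))"
  then obtain a b d where abd: "a < n" "b < n" "d < n" "a \<noteq> b" "b \<noteq> d" "a \<noteq> d"
    and T: "T = {col (circ_dist n a b), col (circ_dist n b d), col (circ_dist n a d)}"
    and "card T = 3"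
    unfolding triangle_colour_sets_def by blast
  then have "col (circ_dist n a b) \<noteq> col (circ_dist n b d)" "col (circ_dist n b d) \<noteq> col (circ_dist n a d)"
    "col (circ_dist n a b) \<noteq> col (circ_dist n a d)"
    by (auto simp: card_insert_if split: if_splits)
  then have "circ_dist n a b \<noteq> circ_dist n b d" "circ_dist n b d \<noteq> circ_dist n a d"
    "circ_dist n a b \<noteq> circ_dist n a d"
    by auto
  moreover have "1 \<le> circ_dist n a b \<and> circ_dist n a b \<le> n div 2"
    "1 \<le> circ_dist n b d \<and> circ_dist n b d \<le> n div 2"
    "1 \<le> circ_dist n a d \<and> circ_dist n a d \<le> n div 2"
    using circ_dist_bounds abd by auto
  ultimately obtain p q r where pqr: "(p, q, r) \<in> distance_triples n"
    "{p, q, r} = {circ_dist n a b, circ_dist n b d, circ_dist n a d}"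
    using distance_triples_sort circ_dist_relation[OF abd] by blast
  have "T = col ` {p, q, r}" unfolding T pqr(2) by simp
  then show "T \<in> (\<lambda>(p, q, r). col ` {p, q, r}) ` distance_triples n" using pqr(1) by force
qed

lemma card_pairs_sum_le:
  "card {(p, q). 1 \<le> p \<and> p < q \<and> q < r \<and> p + q = (r::nat)} \<le> (r - 1) div 2"
proof -
  let ?A = "{(p,q). 1 \<le> p \<and> p < q \<and> q < r \<and> p + q = r}"
  have "inj_on fst ?A" by (auto simp: inj_on_def)
  moreover have "fst ` ?A \<subseteq> {1..(r-1) div 2}" by auto
  ultimately have "card ?A \<le> card {1..(r-1) div 2}" by (rule card_inj_on_le) simp
  then show ?thesis by simp
qed

lemma card_pairs_complement_le:
  "card {(p, q). 1 \<le> p \<and> p < q \<and> q < r \<and> p + q + r = (n::nat)} \<le> r - ((n - r) div 2 + 1)"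
proof -
  let ?B = "{(p,q). 1 \<le> p \<and> p < q \<and> q < r \<and> p + q + r = n}"
  have "inj_on snd ?B" by (auto simp: inj_on_def)
  moreover have "snd ` ?B \<subseteq> {(n - r) div 2 + 1..<r}" by auto
  ultimately have "card ?B \<le> card {(n - r) div 2 + 1..<r}" by (rule card_inj_on_le) simp
  then show ?thesis by simp
qed

lemma sum_pairs_sum_bound: "4 * (\<Sum>r\<in>{1..m}. (r - 1) div 2) \<le> (m::nat)^2"
proof (induction m)
  case 0 then show ?case by simp
next
  case (Suc m)
  have "4 * (\<Sum>r\<in>{1..Suc m}. (r - 1) div 2) = 4 * (\<Sum>r\<in>{1..m}. (r - 1) div 2) + 4 * (m div 2)"
    by simp
  also have "\<dots> \<le> m^2 + 2 * m" using Suc by linarith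
  also have "\<dots> \<le> (Suc m)^2" by (simp add: power2_eq_square)
  finally show ?case .
qed

lemma sum_pairs_complement_bound:
  "12 * (\<Sum>r\<in>{1..m}. r - ((n - r) div 2 + 1)) \<le> (3*m + 3 - (n::nat))^2"
proof (induction m)
  case 0 then show ?case by simp
next
  case (Suc m)
  define t where "t = Suc m - ((n - Suc m) div 2 + 1)"
  have "12 * (\<Sum>r\<in>{1..Suc m}. r - ((n - r) div 2 + 1))
      = 12 * (\<Sum>r\<in>{1..m}. r - ((n - r) div 2 + 1)) + 12 * t"
    by (simp add: t_def)
  also have "\<dots> \<le> (3*m + 3 - n)^2 + 12 * t" using Suc by linarith
  also have "\<dots> \<le> (3 * Suc m + 3 - n)^2"
  proof (cases "3*m + 3 \<le> n")
    case True
    then have "t = 0" unfolding t_def by linarith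
    then show ?thesis using True by simp
  next
    case False
    define x where "x = 3*m + 3 - n"
    have x2: "3 * Suc m + 3 - n = x + 3" using False x_def by simp
    have "2 * t + 1 \<le> x" unfolding t_def x_def using False by linarith
    then have "(3*m + 3 - n)^2 + 12 * t \<le> x^2 + 6 * x + 9" unfolding x_def by simp
    also have "\<dots> = (x + 3)^2" by (simp add: power2_eq_square algebra_simps)
    finally show ?thesis using x2 by simp
  qed
  finally show ?case .
qed

lemma card_distance_triples_le:
  assumes "odd n"
  shows "12 * card (distance_triples n) \<le> n^2 + 3"
proof -
  define M where "M = n div 2"
  have nM: "n = 2*M + 1" using assms M_def by simp
  define A where "A r = {(p,q). 1 \<le> p \<and> p < q \<and> q < r \<and> p + q = (r::nat)}" for r
  define B where "B r = {(p,q). 1 \<le> p \<and> p < q \<and> q < r \<and> p + q + r = n}" for r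
  have finA: "finite (A r)" for r
    by (rule finite_subset[of _ "{..r} \<times> {..r}"]) (auto simp: A_def)
  have finB: "finite (B r)" for r
    by (rule finite_subset[of _ "{..r} \<times> {..r}"]) (auto simp: B_def)
  have sub: "distance_triples n \<subseteq> (\<Union>r\<in>{1..M}. (\<lambda>(p,q). (p,q,r)) ` (A r \<union> B r))"
    unfolding distance_triples_def A_def B_def M_def by force
  have "card (distance_triples n) \<le> card (\<Union>r\<in>{1..M}. (\<lambda>(p,q). (p,q,r)) ` (A r \<union> B r))"
    by (rule card_mono[OF _ sub]) (use finA finB in auto)
  also have "\<dots> \<le> (\<Sum>r\<in>{1..M}. card ((\<lambda>(p,q). (p,q,r)) ` (A r \<union> B r)))"
    by (rule card_UN_le) simp
  also have "\<dots> \<le> (\<Sum>r\<in>{1..M}. card (A r) + card (B r))"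
  proof (rule sum_mono)
    fix r
    have "card ((\<lambda>(p,q). (p,q,r)) ` (A r \<union> B r)) \<le> card (A r \<union> B r)" by (rule card_image_le) (use finA finB in auto)
    also have "\<dots> \<le> card (A r) + card (B r)" by (rule card_Un_le)
    finally show "card ((\<lambda>(p,q). (p,q,r)) ` (A r \<union> B r)) \<le> card (A r) + card (B r)" .
  qed
  also have "\<dots> \<le> (\<Sum>r\<in>{1..M}. (r - 1) div 2 + (r - ((n - r) div 2 + 1)))"
    by (rule sum_mono) (use card_pairs_sum_le card_pairs_complement_le in \<open>auto simp: A_def B_def intro: add_mono\<close>)
  also have "\<dots> = (\<Sum>r\<in>{1..M}. (r - 1) div 2) + (\<Sum>r\<in>{1..M}. r - ((n - r) div 2 + 1))"
    by (rule sum.distrib)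
  finally have c: "card (distance_triples n) \<le> (\<Sum>r\<in>{1..M}. (r - 1) div 2) + (\<Sum>r\<in>{1..M}. r - ((n - r) div 2 + 1))" .
  have "12 * card (distance_triples n) \<le> 3 * M^2 + (3*M + 3 - n)^2"
    using c sum_pairs_sum_bound[of M] sum_pairs_complement_bound[where m=M and n=n] by linarith
  also have "3*M + 3 - n = M + 2" using nM by simp
  finally show ?thesis using nM by (simp add: power2_eq_square algebra_simps)
qed

lemma card_triangle_colour_sets_circulant_le:
  assumes "odd n"
  shows "12 * card (triangle_colour_sets n (\<lambda>x y. col (circ_dist n x y))) \<le> n^2 + 3"
proof -
  have finD: "finite (distance_triples n)"
    by (rule finite_subset[of _ "{..n} \<times> {..n} \<times> {..n}"]) (auto simp: distance_triples_def)
  have "card (triangle_colour_sets n (\<lambda>x y. col (circ_dist n x y))) \<le> card ((\<lambda>(p,q,r). col ` {p,q,r}) ` distance_triples n)"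
    by (rule card_mono[OF _ triangle_colour_sets_circulant_subset]) (use finD in simp)
  also have "\<dots> \<le> card (distance_triples n)" by (rule card_image_le[OF finD])
  finally show ?thesis using card_distance_triples_le[OF assms] by linarith
qed

lemma circ_dist_add:
  assumes "odd n" "1 \<le> u" "u \<le> n div 2" "x < n"
  shows "circ_dist n x ((x + u) mod n) = u"
proof (cases "x + u < n")
  case True
  then have "(x + u) mod n = x + u" by simp
  then show ?thesis using circ_dist_less[of x "x+u" n] True assms by (simp add: min_def)
next
  case False
  have u: "u < n" using assms by linarith
  then have e: "(x + u) mod n = x + u - n" using False assms(4) by (simp add: mod_if)
  have "x + u - n < x" using u False by linarith
  then have "circ_dist n (x + u - n) x = min (x - (x + u - n)) (n - (x - (x + u - n)))"
    using circ_dist_less assms(4) by blast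
  also have "x - (x + u - n) = n - u" using u False by linarith
  moreover have "u < n - u" using assms(1,3) assms(3) odd_two_times_div_two_succ[OF assms(1)] assms(3,4) by linarith
  ultimately show ?thesis using e circ_dist_sym[of n x] by (simp add: min_def)
qed

lemma circulant_colour_class_connected:
  assumes n: "odd n" and u: "1 \<le> u" "u \<le> n div 2" "coprime u n" and "col u = j"
    and "x < n" "y < n"
  shows "(colour_edge n (\<lambda>x y. col (circ_dist n x y)) j)\<^sup>*\<^sup>* x y"
proof -
  let ?E = "colour_edge n (\<lambda>x y. col (circ_dist n x y)) j"
  have step: "?E z ((z + u) mod n)" if "z < n" for z
  proof -
    have dist: "circ_dist n z ((z + u) mod n) = u" using circ_dist_add[OF n u(1,2) that] .
    then have "(z + u) mod n \<noteq> z" using u(1) unfolding circ_dist_def by auto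
    moreover have "(z + u) mod n < n" using that by simp
    ultimately show ?thesis unfolding colour_edge_def using dist \<open>col u = j\<close> that by simp
  qed
  have iter: "?E\<^sup>*\<^sup>* x ((x + t * u) mod n)" for t
  proof (induction t)
    case 0
    then show ?case using \<open>x < n\<close> by simp
  next
    case (Suc t)
    have "((x + t * u) mod n + u) mod n = (x + t * u + u) mod n" by (rule mod_add_left_eq)
    then have "(x + Suc t * u) mod n = ((x + t * u) mod n + u) mod n" by (simp add: algebra_simps)
    moreover have "(x + t * u) mod n < n" using \<open>x < n\<close> by simp
    ultimately show ?case using Suc step by (metis rtranclp.rtrancl_into_rtrancl)
  qed
  obtain v where v: "[u * v = 1] (mod n)" using cong_solve_coprime_nat[OF u(3)] by auto
  define t where "t = (y + n - x) * v"
  have "[x + t * u = x + (y + n - x) * (u * v)] (mod n)"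
    unfolding t_def by (simp add: algebra_simps)
  also have "[x + (y + n - x) * (u * v) = x + (y + n - x) * 1] (mod n)"
    by (intro cong_add cong_mult cong_refl v)
  also have "x + (y + n - x) * 1 = y + n" using \<open>x < n\<close> by simp
  also have "[y + n = y] (mod n)" by (simp add: cong_def)
  finally have "(x + t * u) mod n = y" using \<open>y < n\<close> by (simp add: cong_def)
  then show ?thesis using iter by metis
qed

lemma exists_circulant_colouring:
  assumes "odd n" "1 \<le> k" "k \<le> card {u\<in>{1..n div 2}. coprime u n}"
  shows "\<exists>c. connected_colouring k n c \<and> 12 * card (triangle_colour_sets n c) \<le> n^2 + 3"
proof -
  obtain U where U: "U \<subseteq> {u\<in>{1..n div 2}. coprime u n}" "card U = k"
    using obtain_subset_with_card_n assms(3) by metis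
  then have "finite U" using assms(2) card_gt_0_iff by fastforce
  then obtain e where e: "bij_betw e U {0..<k}" using ex_bij_betw_finite_nat U(2) by metis
  define col where "col d = (if d \<in> U then e d + 1 else 1)" for d
  define c where "c x y = col (circ_dist n x y)" for x y
  have "col d \<in> {1..k}" for d
  proof (cases "d \<in> U")
    case True
    then have "e d < k" using e bij_betwE by fastforce
    then show ?thesis using True col_def by simp
  qed (use col_def assms(2) in simp)
  then have "colouring k n c" unfolding colouring_def c_def using circ_dist_sym by metis
  moreover have "(colour_edge n c j)\<^sup>*\<^sup>* x y" if "j \<in> {1..k}" "x < n" "y < n" for j x y
  proof -
    have "j - 1 \<in> {0..<k}" using that by auto
    then obtain u where u: "u \<in> U" "e u = j - 1" using e by (metis bij_betw_iff_bijections)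
    then have "col u = j" using that col_def by simp
    show ?thesis unfolding c_def
      by (rule circulant_colour_class_connected[where u = u]) (use u U \<open>col u = j\<close> that assms in auto)
  qed
  ultimately have "connected_colouring k n c" unfolding connected_colouring_def by blast
  moreover have "12 * card (triangle_colour_sets n c) \<le> n^2 + 3"
    unfolding c_def by (rule card_triangle_colour_sets_circulant_le[OF assms(1)])
  ultimately show ?thesis by blast
qed

section \<open>Moduli with many units below half\<close>

lemma card_multiples_le: "card {u\<in>{1..M}. q dvd u} \<le> M div q"
proof (cases "q = 0")
  case False
  have "inj_on (\<lambda>u. u div q) {u\<in>{1..M}. q dvd u}" by (auto simp: inj_on_def elim!: dvdE)
  moreover have "(\<lambda>u. u div q) ` {u\<in>{1..M}. q dvd u} \<subseteq> {1..M div q}"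
    using False by (auto elim!: dvdE simp: less_eq_div_iff_mult_less_eq mult.commute)
  ultimately have "card {u\<in>{1..M}. q dvd u} \<le> card {1..M div q}" by (rule card_inj_on_le) simp
  then show ?thesis by simp
qed simp

lemma card_coprime_lower:
  fixes n :: nat
  assumes "n \<noteq> 0"
  shows "real M * (1 - (\<Sum>q\<in>prime_factors n. 1 / real q)) \<le> real (card {u\<in>{1..M}. coprime u n})"
proof -
  let ?U = "{u\<in>{1..M}. coprime u n}" and ?NU = "{u\<in>{1..M}. \<not> coprime u n}"
  have "finite ?U" "finite ?NU" "?U \<inter> ?NU = {}" by auto
  then have "card (?U \<union> ?NU) = card ?U + card ?NU" by (rule card_Un_disjoint)
  moreover have "?U \<union> ?NU = {1..M}" by auto
  ultimately have "M = card ?U + card ?NU" by (metis card_atLeastAtMost diff_Suc_1)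
  have "?NU \<subseteq> (\<Union>q\<in>prime_factors n. {u\<in>{1..M}. q dvd u})"
  proof
    fix u assume u: "u \<in> ?NU"
    then have "gcd u n \<noteq> 1" using coprime_iff_gcd_eq_1 by blast
    from prime_factor_nat[OF this] obtain p where p: "prime p" "p dvd gcd u n" by blast
    then have "p \<in> prime_factors n" using prime_factorsI[OF assms p(1)] by simp
    moreover have "u \<in> {u\<in>{1..M}. p dvd u}" using u p(2) by simp
    ultimately show "u \<in> (\<Union>q\<in>prime_factors n. {u\<in>{1..M}. q dvd u})" by (rule UN_I)
  qed
  then have "card ?NU \<le> card (\<Union>q\<in>prime_factors n. {u\<in>{1..M}. q dvd u})"
    by (rule card_mono[rotated]) simp
  also have "\<dots> \<le> (\<Sum>q\<in>prime_factors n. card {u\<in>{1..M}. q dvd u})"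
    by (rule card_UN_le) simp
  finally have "real (card ?NU) \<le> (\<Sum>q\<in>prime_factors n. real (card {u\<in>{1..M}. q dvd u}))"
    by (simp only: of_nat_le_iff flip: of_nat_sum)
  also have "\<dots> \<le> (\<Sum>q\<in>prime_factors n. real M / real q)"
  proof (rule sum_mono)
    fix q
    have "real (card {u\<in>{1..M}. q dvd u}) \<le> real (M div q)" using card_multiples_le by simp
    also have "\<dots> \<le> real M / real q" by (rule of_nat_div_le_of_nat)
    finally show "real (card {u\<in>{1..M}. q dvd u}) \<le> real M / real q" .
  qed
  also have "\<dots> = real M * (\<Sum>q\<in>prime_factors n. 1 / real q)"
    by (simp add: sum_distrib_left)
  finally have "real (card ?NU) \<le> real M * (\<Sum>q\<in>prime_factors n. 1 / real q)" .
  moreover have "real M = real (card ?U) + real (card ?NU)"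
    using \<open>M = card ?U + card ?NU\<close> by (metis of_nat_add)
  moreover have "real M * (1 - (\<Sum>q\<in>prime_factors n. 1 / real q)) =
      real M - real M * (\<Sum>q\<in>prime_factors n. 1 / real q)"
    by (simp add: algebra_simps)
  ultimately show ?thesis by linarith
qed

lemma card_coprime_half_ge:
  fixes n m k :: nat
  assumes "n \<noteq> 0" "1 \<le> m" "k * (2*m + 1) \<le> 2*m * (n div 2)"
    and small: "(\<Sum>q\<in>prime_factors n. 1 / real q) \<le> 1 / (4 * real m)"
  shows "k \<le> card {u\<in>{1..n div 2}. coprime u n}"
proof -
  define M where "M = real (n div 2)"
  have m: "real m \<ge> 1" using assms(2) by simp
  have "real (k * (2*m + 1)) \<le> real (2*m * (n div 2))"
    using assms(3) by (simp only: of_nat_le_iff)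
  then have "real k * (2 * real m + 1) \<le> 2 * real m * M"
    unfolding M_def by (simp add: algebra_simps)
  moreover have "real k * (4 * real m) * (2 * real m) \<le> real k * (2 * real m + 1) * (4 * real m - 1)"
  proof -
    have "real k * (2 * real m + 1) * (4 * real m - 1) - real k * (4 * real m) * (2 * real m)
        = real k * (2 * real m - 1)"
      by (simp add: algebra_simps)
    moreover have "0 \<le> real k * (2 * real m - 1)" using m by (intro mult_nonneg_nonneg) auto
    ultimately show ?thesis by linarith
  qed
  moreover have "real k * (2 * real m + 1) * (4 * real m - 1) \<le> 2 * real m * M * (4 * real m - 1)"
    using calculation(1) m by (intro mult_right_mono) auto
  ultimately have "real k * (4 * real m) * (2 * real m) \<le> M * (4 * real m - 1) * (2 * real m)"
    by (simp add: algebra_simps)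
  then have "real k * (4 * real m) \<le> M * (4 * real m - 1)"
    by (rule mult_right_le_imp_le) (use m in simp)
  then have "real k \<le> M * (1 - 1 / (4 * real m))"
    using m by (simp add: field_simps)
  also have "\<dots> \<le> M * (1 - (\<Sum>q\<in>prime_factors n. 1 / real q))"
    using small unfolding M_def by (intro mult_left_mono) auto
  also have "\<dots> \<le> real (card {u\<in>{1..n div 2}. coprime u n})"
    unfolding M_def by (rule card_coprime_lower[OF assms(1)])
  finally show ?thesis by simp
qed

lemma sum_inverse_squares_le:
  assumes "1 \<le> L"
  shows "(\<Sum>q\<in>{L<..N}. 1 / (real q)^2) \<le> 1 / real L"
proof -
  have telescope: "(\<Sum>q\<in>{L<..N}. 1 / (real q)^2) \<le> 1 / real L - 1 / real N" if "L \<le> N" for N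
    using that
  proof (induction N rule: dec_induct)
    case (step N)
    have N: "real N \<ge> 1" using step.hyps assms by simp
    have "1 / (real (Suc N))^2 \<le> 1 / (real N * real (Suc N))"
      using N by (intro divide_left_mono) (auto simp: power2_eq_square)
    also have "\<dots> = 1 / real N - 1 / real (Suc N)"
      using N by (simp add: field_simps)
    finally have "1 / (real (Suc N))^2 \<le> 1 / real N - 1 / real (Suc N)" .
    moreover have "{L<..Suc N} = insert (Suc N) {L<..N}" using step.hyps by auto
    ultimately show ?case using step.IH by simp
  qed simp
  show ?thesis
  proof (cases "L \<le> N")
    case True
    have "0 \<le> 1 / real N" by simp
    with telescope[OF True] show ?thesis by linarith
  qed simp
qed

lemma sum_inverse_le:
  assumes "1 \<le> R"
  shows "(\<Sum>q\<in>{L<..N}. 1 / real q) \<le> real R + real N / real R"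
proof -
  let ?small = "{L<..N} \<inter> {..R}" and ?large = "{L<..N} - {..R}"
  have "(\<Sum>q\<in>?small. 1 / real q) \<le> real (card ?small)"
    using sum_bounded_above[of ?small "\<lambda>q. 1 / real q" 1] by simp
  also have "\<dots> \<le> real (card {1..R})"
    by (intro of_nat_mono card_mono) auto
  also have "\<dots> = real R" by simp
  finally have small: "(\<Sum>q\<in>?small. 1 / real q) \<le> real R" .
  have "(\<Sum>q\<in>?large. 1 / real q) \<le> real (card ?large) * (1 / real R)"
    using sum_bounded_above[of ?large "\<lambda>q. 1 / real q" "1 / real R"] assms
    by (auto simp: frac_le)
  also have "\<dots> \<le> real (card {1..N}) * (1 / real R)"
    by (intro mult_right_mono of_nat_mono card_mono) auto
  also have "\<dots> = real N / real R" by simp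
  finally have large: "(\<Sum>q\<in>?large. 1 / real q) \<le> real N / real R" .
  have "(\<Sum>q\<in>{L<..N}. 1 / real q) = (\<Sum>q\<in>?small. 1 / real q) + (\<Sum>q\<in>?large. 1 / real q)"
    by (rule sum.Int_Diff) simp
  with small large show ?thesis by linarith
qed

lemma card_progression_multiples_le:
  assumes "prime q" "L < q"
  shows "card {t\<in>{..<s}. q dvd (1 + fact L * (B + t))} \<le> s div q + 1"
proof -
  let ?S = "{t\<in>{..<s}. q dvd (1 + fact L * (B + t))}"
  have "coprime (fact L) q"
    using assms prime_dvd_fact_iff[of q L] prime_imp_coprime_nat by (simp add: coprime_commute)
  have "inj_on (\<lambda>t. t div q) ?S"
  proof (rule inj_onI)
    fix t t' assume "t \<in> ?S" "t' \<in> ?S" and div: "t div q = t' div q"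
    then have "[1 + fact L * (B + t) = 1 + fact L * (B + t')] (mod q)"
      by (simp add: cong_def dvd_eq_mod_eq_0)
    then have "[fact L * (B + t) = fact L * (B + t')] (mod q)"
      by (rule iffD1[OF cong_add_lcancel_nat])
    then have "[B + t = B + t'] (mod q)"
      by (rule iffD1[OF cong_mult_lcancel_nat[OF \<open>coprime (fact L) q\<close>]])
    then have "[t = t'] (mod q)" by (rule iffD1[OF cong_add_lcancel_nat])
    then have "t mod q = t' mod q" by (simp add: cong_def)
    with div show "t = t'" by (metis div_mod_decomp)
  qed
  moreover have "(\<lambda>t. t div q) ` ?S \<subseteq> {..s div q}" by (auto intro: div_le_mono)
  ultimately have "card ?S \<le> card {..s div q}" by (rule card_inj_on_le) simp
  then show ?thesis by simp
qed

lemma exists_le_of_sum_le: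
  fixes g :: "nat \<Rightarrow> real"
  assumes "0 < s" "(\<Sum>t<s. g t) \<le> real s * B"
  shows "\<exists>t<s. g t \<le> B"
proof (rule ccontr)
  assume "\<not> ?thesis"
  then have "(\<Sum>t<s. B) < (\<Sum>t<s. g t)" using assms(1) by (intro sum_strict_mono) auto
  with assms(2) show False by simp
qed

text \<open>Terms of the progression \<open>1 + L! (B + t)\<close> have no prime factors up to \<open>L\<close>; averaging over
  \<open>t < s\<close> the sum of \<open>1/q\<close> over the larger prime factors bounds it for some term.\<close>
lemma exists_progression_term_sparse_prime_factors:
  assumes "1 \<le> L" "0 < s" "1 \<le> R" and N: "\<And>t. t < s \<Longrightarrow> 1 + fact L * (B + t) \<le> N"
  shows "\<exists>t<s. (\<Sum>q\<in>prime_factors (1 + fact L * (B + t)). 1 / real q)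
                \<le> 1 / real L + (real R + real N / real R) / real s"
proof -
  define n where "n t = 1 + fact L * (B + t)" for t
  define Q where "Q = {q\<in>{L<..N}. prime q}"
  have "finite Q" unfolding Q_def by simp
  have prime_factors_n: "prime_factors (n t) = {q\<in>Q. q dvd n t}" if "t < s" for t
  proof -
    have "L < q" if "prime q" "q dvd n t" for q
    proof (rule ccontr)
      assume "\<not> L < q"
      then have "q dvd fact L * (B + t)" using \<open>prime q\<close> prime_dvd_fact_iff by auto
      with \<open>q dvd n t\<close> have "q dvd 1"
        using dvd_add_left_iff[of q "fact L * (B + t)" 1] unfolding n_def by simp
      with \<open>prime q\<close> show False by simp
    qed
    moreover have "q \<le> N" if "q dvd n t" for q
      using dvd_imp_le[OF that] N[OF \<open>t < s\<close>] unfolding n_def by simp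
    ultimately show ?thesis unfolding Q_def n_def by (auto simp: in_prime_factors_iff)
  qed
  have "(\<Sum>t<s. \<Sum>q\<in>prime_factors (n t). 1 / real q) = (\<Sum>t<s. \<Sum>q\<in>Q. if q dvd n t then 1 / real q else 0)"
    by (rule sum.cong) (simp_all add: prime_factors_n sum.inter_filter[OF \<open>finite Q\<close>])
  also have "\<dots> = (\<Sum>q\<in>Q. 1 / real q * real (card {t\<in>{..<s}. q dvd n t}))"
    by (subst sum.swap) (simp add: sum.inter_filter[symmetric])
  also have "\<dots> \<le> (\<Sum>q\<in>Q. 1 / real q * (real s / real q + 1))"
  proof (rule sum_mono)
    fix q assume "q \<in> Q"
    then have "card {t\<in>{..<s}. q dvd n t} \<le> s div q + 1"
      unfolding Q_def n_def by (intro card_progression_multiples_le) auto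
    then have "real (card {t\<in>{..<s}. q dvd n t}) \<le> real (s div q) + 1"
      by (metis of_nat_Suc of_nat_le_iff Suc_eq_plus1 add.commute)
    also have "\<dots> \<le> real s / real q + 1"
      using of_nat_div_le_of_nat[of s q] by simp
    finally have "real (card {t\<in>{..<s}. q dvd n t}) \<le> real s / real q + 1" .
    then show "1 / real q * real (card {t\<in>{..<s}. q dvd n t}) \<le> 1 / real q * (real s / real q + 1)"
      by (rule mult_left_mono) simp
  qed
  also have "\<dots> \<le> (\<Sum>q\<in>{L<..N}. 1 / real q * (real s / real q + 1))"
    by (rule sum_mono2) (auto simp: Q_def)
  also have "\<dots> = (\<Sum>q\<in>{L<..N}. real s * (1 / (real q)^2) + 1 / real q)"
    by (rule sum.cong) (simp_all add: field_simps power2_eq_square)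
  also have "\<dots> = real s * (\<Sum>q\<in>{L<..N}. 1 / (real q)^2) + (\<Sum>q\<in>{L<..N}. 1 / real q)"
    by (simp add: sum.distrib sum_distrib_left)
  also have "\<dots> \<le> real s * (1 / real L) + (real R + real N / real R)"
    by (intro add_mono mult_left_mono sum_inverse_squares_le sum_inverse_le) (use assms in auto)
  also have "\<dots> = real s * (1 / real L + (real R + real N / real R) / real s)"
    using \<open>0 < s\<close> by (simp add: field_simps)
  finally show ?thesis using exists_le_of_sum_le[OF \<open>0 < s\<close>] unfolding n_def by blast
qed

lemma progression_window:
  fixes m P k :: nat
  assumes m: "1 \<le> m" and P: "1 \<le> P" and k: "2*m*(P + 1) \<le> k"
  obtains B s where "0 < s" "k*(2*m + 1) < m*P*B" "real k \<le> 4 * real m * real P * real s"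
    "\<And>t. t < s \<Longrightarrow> m*(1 + P*(B + t)) \<le> 2*(m + 1)*k"
proof -
  define B where "B = k*(2*m + 1) div (m*P) + 1"
  define s where "s = k div (2*m*P)"
  have "0 < m*P" using m P by simp
  have "k*(2*m + 1) div (m*P) * (m*P) + k*(2*m + 1) mod (m*P) = k*(2*m + 1)"
    by (rule div_mult_mod_eq)
  moreover have "k*(2*m + 1) mod (m*P) < m*P" using \<open>0 < m*P\<close> by simp
  moreover have "m*P*B = k*(2*m + 1) div (m*P) * (m*P) + m*P"
    unfolding B_def by (simp add: algebra_simps)
  ultimately have B: "k*(2*m + 1) < m*P*B" and B': "m*P*B \<le> k*(2*m + 1) + m*P"
    by linarith+
  have "k div (2*m*P) * (2*m*P) + k mod (2*m*P) = k" by (rule div_mult_mod_eq)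
  moreover have "k mod (2*m*P) < 2*m*P" using \<open>0 < m*P\<close> by simp
  moreover have "2*m*P*s = k div (2*m*P) * (2*m*P)" unfolding s_def by simp
  ultimately have s: "2*m*P*s \<le> k" "k < 2*m*P*s + 2*m*P" by linarith+
  have "0 < s" using s(2) k by (cases "s = 0") (simp_all add: algebra_simps)
  then have "2*m*P \<le> 2*m*P*s" by simp
  then have "k < 2*(2*m*P*s)" using s(2) by linarith
  then have "k < 4*m*P*s" by (simp add: algebra_simps)
  then have ks: "real k \<le> 4 * real m * real P * real s"
    by (metis less_imp_le of_nat_le_iff of_nat_mult of_nat_numeral)
  have window: "m*(1 + P*(B + t)) \<le> 2*(m + 1)*k" if "t < s" for t
  proof -
    have "m*P*t \<le> m*P*s" using that by simp
    have "m*(1 + P*(B + t)) = m + m*P*B + m*P*t" by (simp add: algebra_simps)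
    also have "\<dots> \<le> m + k*(2*m + 1) + m*P + m*P*s" using B' \<open>m*P*t \<le> m*P*s\<close> by linarith
    also have "\<dots> \<le> 2*(m + 1)*k" using s(1) k by (simp add: algebra_simps)
    finally show ?thesis .
  qed
  show ?thesis by (rule that[OF \<open>0 < s\<close> B ks window])
qed

lemma progression_error_le:
  fixes k m P R s :: real
  assumes "1 \<le> m" "1 \<le> P" "R = 256 * m^2 * P" "64 * m^2 * P * R \<le> k" "k \<le> 4 * m * P * s"
  shows "(R + 4 * k / R) / s \<le> 1 / (8 * m)"
proof -
  have R: "R > 0" using assms by simp
  have k: "k > 0" using assms(1,2,4) R by (smt (verit) mult_pos_pos zero_less_power)
  have s: "k / (4 * m * P) \<le> s" using assms k by (simp add: field_simps)
  moreover have "0 < k / (4 * m * P)" using k assms(1,2) by simp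
  ultimately have "0 < s" by linarith
  have "(R + 4 * k / R) / s \<le> (R + 4 * k / R) / (k / (4 * m * P))"
    using s R k \<open>0 < s\<close> assms(1,2) by (intro divide_left_mono) (auto intro!: divide_pos_pos add_nonneg_nonneg)
  also have "\<dots> = 4 * m * P * R / k + 16 * m * P / R"
    using assms R k by (simp add: field_simps)
  also have "16 * m * P / R = 1 / (16 * m)"
    using assms(1,2,3) by (simp add: field_simps power2_eq_square)
  also have "4 * m * P * R / k \<le> 1 / (16 * m)"
    using assms k by (simp add: field_simps power2_eq_square)
  finally show ?thesis by simp
qed

text \<open>For \<open>n = 1 + L! (B + t)\<close> with \<open>L = 8m\<close>, the progression window keeps \<open>n\<close> near \<open>2k(1 + 1/m)\<close>,
  and averaging finds a term whose prime factors are sparse enough to leave \<open>k\<close> units below \<open>n/2\<close>.\<close>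
lemma eventually_odd_modulus_with_many_units:
  fixes m :: nat
  assumes m: "1 \<le> m"
  shows "\<forall>\<^sub>F k in at_top. \<exists>n. odd n \<and> 3 \<le> n \<and> k \<le> card {u\<in>{1..n div 2}. coprime u n}
                          \<and> m*n \<le> 2*(m + 1)*k"
proof -
  define L where "L = 8*m"
  define P where "P = (fact L :: nat)"
  define R where "R = 256 * m^2 * P"
  have P: "1 \<le> P" "even P" using m unfolding P_def L_def by (simp_all add: fact_ge_1 dvd_fact)
  have "1 \<le> L" "1 \<le> R" using m P(1) unfolding L_def R_def by simp_all
  have "\<exists>n. odd n \<and> 3 \<le> n \<and> k \<le> card {u\<in>{1..n div 2}. coprime u n} \<and> m*n \<le> 2*(m + 1)*k"
    if k: "64*m^2*P*R + 2*m*(P + 1) \<le> k" for k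
  proof -
    have mk: "2*m*(P + 1) \<le> k" using k by linarith
    then obtain s B where s: "0 < s" and B: "k*(2*m + 1) < m*P*B"
      and ks: "real k \<le> 4 * real m * real P * real s"
      and window: "\<And>t. t < s \<Longrightarrow> m*(1 + P*(B + t)) \<le> 2*(m + 1)*k"
      using progression_window[OF m P(1)] by blast
    have "1 + fact L * (B + t) \<le> 4*k" if "t < s" for t
    proof -
      have "k \<le> m*k" using m by simp
      then have "2*(m + 1)*k \<le> m*(4*k)" by (simp add: algebra_simps)
      then have "m*(1 + P*(B + t)) \<le> m*(4*k)" using window[OF that] by linarith
      then have "1 + P*(B + t) \<le> 4*k" using m mult_le_cancel1[of m "1 + P*(B + t)" "4*k"] by simp
      then show ?thesis unfolding P_def .
    qed
    from exists_progression_term_sparse_prime_factors[OF \<open>1 \<le> L\<close> s \<open>1 \<le> R\<close> this]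
    obtain t where "t < s" and sparse:
        "(\<Sum>q\<in>prime_factors (1 + P*(B + t)). 1 / real q)
           \<le> 1 / real L + (real R + real (4*k) / real R) / real s"
      unfolding P_def by blast
    define n where "n = 1 + P*(B + t)"
    have "odd n" unfolding n_def using P(2) by simp
    have "2 \<le> P*B"
    proof (rule ccontr)
      assume "\<not> 2 \<le> P*B"
      then have "m*P*B \<le> m" by (simp add: mult.assoc)
      moreover have "1 \<le> 2*m*(P + 1)" using m by simp
      then have "1 \<le> k" using mk by linarith
      then have "2*m + 1 \<le> k*(2*m + 1)" using mult_le_mono1[of 1 k "2*m + 1"] by simp
      ultimately show False using B by linarith
    qed
    then have "3 \<le> n" unfolding n_def by (simp add: algebra_simps)
    have "real (64*m^2*P*R) \<le> real k" using k by linarith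
    then have "64 * (real m)^2 * real P * real R \<le> real k" by simp
    moreover have "real R = 256 * (real m)^2 * real P" unfolding R_def by simp
    ultimately have "(R + 4 * real k / R) / real s \<le> 1 / (8 * real m)"
      using progression_error_le[of "real m" "real P" "real R" "real k" "real s"] m P(1) ks by simp
    moreover have "1 / real L = 1 / (8 * real m)"
      "(real R + real (4*k) / real R) / real s = (real R + 4 * real k / real R) / real s"
      unfolding L_def by simp_all
    moreover have "1 / (8 * real m) + 1 / (8 * real m) = 1 / (4 * real m)" by simp
    ultimately have "(\<Sum>q\<in>prime_factors n. 1 / real q) \<le> 1 / (4 * real m)"
      using sparse unfolding n_def by linarith
    moreover have "2 * (n div 2) = P*(B + t)" unfolding n_def using P(2) by auto
    then have "2*m*(n div 2) = m*P*B + m*P*t" by (simp add: algebra_simps)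
    then have "k*(2*m + 1) \<le> 2*m*(n div 2)" using B by linarith
    ultimately have "k \<le> card {u\<in>{1..n div 2}. coprime u n}"
      using card_coprime_half_ge[of n m k] m \<open>3 \<le> n\<close> by simp
    moreover have "m*n \<le> 2*(m + 1)*k" unfolding n_def by (rule window[OF \<open>t < s\<close>])
    ultimately show ?thesis using \<open>odd n\<close> \<open>3 \<le> n\<close> by blast
  qed
  then show ?thesis unfolding eventually_at_top_linorder by blast
qed

lemma f_le_card_triangle_colour_sets:
  assumes "2 \<le> n" "connected_colouring k n c"
  shows "f k \<le> card (triangle_colour_sets n c)"
  unfolding f_def using assms by (intro cInf_lower bdd_belowI[of _ 0]) auto

lemma f_lower_bound:
  assumes "2 \<le> n" "connected_colouring k n c"
  shows "k * (k - 2) \<le> 3 * f k"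
proof -
  let ?S = "{card (triangle_colour_sets n c) | n c. 2 \<le> n \<and> connected_colouring k n c}"
  have "Inf ?S \<in> ?S" using assms by (intro Inf_nat_def1) blast
  then obtain n' c' where "2 \<le> n'" "connected_colouring k n' c'"
    "f k = card (triangle_colour_sets n' c')"
    unfolding f_def by blast
  then show ?thesis using card_triangle_colour_sets_lower by simp
qed

lemma f_upper_bound:
  assumes m: "1 \<le> m" and n: "2 \<le> n" "m*n \<le> 2*(m + 1)*k"
    and c: "connected_colouring k n c" "12 * card (triangle_colour_sets n c) \<le> n^2 + 3"
  shows "3 * real (f k) \<le> (1 + 1 / real m)^2 * (real k)^2 + 3/4"
proof -
  have "12 * f k \<le> n^2 + 3" using f_le_card_triangle_colour_sets[OF n(1) c(1)] c(2) by linarith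
  then have "real (12 * f k) \<le> real (n^2 + 3)" by (simp only: of_nat_le_iff)
  then have "12 * real (f k) \<le> (real n)^2 + 3" by simp
  have "real (m*n) \<le> real (2*(m + 1)*k)" using n(2) by (simp only: of_nat_le_iff)
  then have "real m * real n \<le> 2 * (real m + 1) * real k" by (simp add: algebra_simps)
  then have "real n \<le> 2 * (1 + 1 / real m) * real k" using m by (simp add: field_simps)
  then have "(real n)^2 \<le> (2 * (1 + 1 / real m) * real k)^2" by (simp add: power_mono)
  also have "\<dots> = 4 * ((1 + 1 / real m)^2 * (real k)^2)" by (simp add: power2_eq_square algebra_simps)
  finally show ?thesis using \<open>12 * real (f k) \<le> (real n)^2 + 3\<close> by linarith
qed

lemma eventually_connected_circulant_colouring:
  assumes "1 \<le> m"
  shows "\<forall>\<^sub>F k in at_top. \<exists>n c. 2 \<le> n \<and> m*n \<le> 2*(m + 1)*k \<and> connected_colouring k n c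
           \<and> 12 * card (triangle_colour_sets n c) \<le> n^2 + 3"
  using eventually_odd_modulus_with_many_units[OF assms] eventually_ge_at_top[of 1]
proof eventually_elim
  case (elim k)
  then obtain n where n: "odd n" "3 \<le> n" "k \<le> card {u\<in>{1..n div 2}. coprime u n}"
    "m*n \<le> 2*(m + 1)*k"
    by blast
  from exists_circulant_colouring[OF n(1) \<open>1 \<le> k\<close> n(3)] obtain c
    where "connected_colouring k n c" "12 * card (triangle_colour_sets n c) \<le> n^2 + 3"
    by blast
  with n(2,4) show ?case by (intro exI[of _ n] exI[of _ c]) simp
qed

lemma exists_inverse_square_le:
  assumes "0 < e"
  obtains m :: nat where "1 \<le> m" "(1 + 1 / real m)^2 \<le> 1 + e"
proof
  define m where "m = nat \<lceil>3 / e\<rceil> + 1"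
  show "1 \<le> m" unfolding m_def by simp
  have "3 / e \<le> real m" unfolding m_def by linarith
  then have x: "1 / real m \<le> e / 3" "1 / real m \<le> 1"
    using assms \<open>1 \<le> m\<close> by (simp_all add: field_simps)
  have "(1 + 1 / real m)^2 = 1 + 2 * (1 / real m) + (1 / real m) * (1 / real m)"
    by (simp add: power2_eq_square algebra_simps)
  also have "\<dots> \<le> 1 + 3 * (1 / real m)"
    using x(2) mult_left_le_one_le[of "1 / real m" "1 / real m"] by simp
  finally show "(1 + 1 / real m)^2 \<le> 1 + e" using x(1) by linarith
qed

lemma abs_sub_square_third_le:
  fixes x y c e :: real
  assumes "0 < c" "1 \<le> x" "2 / c \<le> x" "x * (x - 2) \<le> 3 * y" "3 * y \<le> e * x^2 + 3/4"
    and "e \<le> 1 + c/2"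
  shows "\<bar>y - x^2 / 3\<bar> \<le> c * \<bar>x^2 / 3\<bar>"
proof -
  have "2 \<le> c * x" using assms(1,3) by (simp add: field_simps)
  then have "2 * x \<le> c * x * x" using assms(2) by (intro mult_right_mono) auto
  then have cx: "2 * x \<le> c * x^2" by (simp add: power2_eq_square mult.assoc)
  have "e * x^2 \<le> (1 + c/2) * x^2" using assms(6) by (intro mult_right_mono) auto
  then have "e * x^2 \<le> x^2 + c * x^2 / 2" by (simp add: algebra_simps)
  moreover have "x * (x - 2) = x^2 - 2 * x" by (simp add: algebra_simps power2_eq_square)
  ultimately have "- (c * x^2) \<le> 3 * y - x^2" "3 * y - x^2 \<le> c * x^2"
    using assms(2,4,5) cx by linarith+
  moreover have "\<bar>x^2 / 3\<bar> = x^2 / 3" "c * (x^2 / 3) = c * x^2 / 3" by simp_all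
  ultimately show ?thesis unfolding abs_le_iff by linarith
qed

theorem theorem7:
  shows "(\<lambda>k. real (f k)) \<sim>[at_top] (\<lambda>k. real k ^ 2 / 3)"
  unfolding asymp_equiv_altdef
proof (rule landau_o.smallI)
  fix c :: real
  assume "0 < c"
  then obtain m where m: "1 \<le> m" "(1 + 1 / real m)^2 \<le> 1 + c/2"
    using exists_inverse_square_le[of "c/2"] by auto
  have "\<forall>\<^sub>F k in at_top. max 2 (2 / c) \<le> real k"
    using filterlim_real_sequentially unfolding filterlim_at_top by blast
  with eventually_connected_circulant_colouring[OF m(1)]
  show "\<forall>\<^sub>F k in at_top. norm (real (f k) - real k ^ 2 / 3) \<le> c * norm (real k ^ 2 / 3)"
  proof eventually_elim
    case (elim k)
    then obtain n col where n: "2 \<le> n" "m*n \<le> 2*(m + 1)*k" and col: "connected_colouring k n col"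
      "12 * card (triangle_colour_sets n col) \<le> n^2 + 3" by blast
    have "2 \<le> k" using elim(2) by simp
    have "real (k * (k - 2)) \<le> real (3 * f k)"
      using f_lower_bound[OF n(1) col(1)] by (simp only: of_nat_le_iff)
    then have "real k * (real k - 2) \<le> 3 * real (f k)" using \<open>2 \<le> k\<close> by (simp add: of_nat_diff)
    with f_upper_bound[OF m(1) n col] \<open>0 < c\<close> elim(2) m(2) show ?case
      by (simp only: real_norm_def) (rule abs_sub_square_third_le; simp)
  qed
qed

end
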